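(* Let $G$ be a $P_5$-free graph and let $C\subseteq V(G)$ be partitioned into independent sets $C_1,\dots,C_k$ of $G$. Let $D\subseteq C$ be such that $G[D]$ is connected, every vertex of $C$ is in $D$ or has a neighbor in $D$, and $D\cap C_r\neq\emptyset$ for every $r\in\{1,\dots,k\}$. Assume moreover that for every vertex $u\in V(G)\setminus C$ there exists $r\in\{1,\dots,k\}$ such that $u$ has no neighbor in $D\cap C_r$. Let $Y:=V(G)\setminus N[C]$. Then for every connected component $Y'$ of $G[Y]$, the vertex set $V(Y')$ is a module in $G$.
   Context: For $A\subseteq V(G)$, $N(A)$ is the set of vertices outside $A$ with a neighbor in $A$, and $N[A]=A\cup N(A)$. A set $M\subseteq V(G)$ is a module in $G$ if $N(u)\setminus M = N(v)\setminus M$ for all $u,v\in M$. A graph is $P_5$-free if it has no induced path on 5 vertices. *)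

theory Defs
  imports Main
begin

definition graph :: "'a set \<Rightarrow> ('a \<Rightarrow> 'a \<Rightarrow> bool) \<Rightarrow> bool" where
  "graph V E \<longleftrightarrow> finite V \<and> (\<forall>u v. E u v \<longrightarrow> u \<in> V \<and> v \<in> V)
     \<and> (\<forall>u v. E u v \<longrightarrow> E v u) \<and> (\<forall>v. \<not> E v v)"

definition nbhd :: "'a set \<Rightarrow> ('a \<Rightarrow> 'a \<Rightarrow> bool) \<Rightarrow> 'a set \<Rightarrow> 'a set" where
  "nbhd V E A = {v \<in> V - A. \<exists>u\<in>A. E u v}"

definition cnbhd :: "'a set \<Rightarrow> ('a \<Rightarrow> 'a \<Rightarrow> bool) \<Rightarrow> 'a set \<Rightarrow> 'a set" where
  "cnbhd V E A = A \<union> nbhd V E A"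

definition is_module :: "'a set \<Rightarrow> ('a \<Rightarrow> 'a \<Rightarrow> bool) \<Rightarrow> 'a set \<Rightarrow> bool" where
  "is_module V E M \<longleftrightarrow> M \<subseteq> V \<and>
     (\<forall>u\<in>M. \<forall>v\<in>M. nbhd V E {u} - M = nbhd V E {v} - M)"

definition P5_free :: "'a set \<Rightarrow> ('a \<Rightarrow> 'a \<Rightarrow> bool) \<Rightarrow> bool" where
  "P5_free V E \<longleftrightarrow> \<not> (\<exists>p. length p = 5 \<and> distinct p \<and> set p \<subseteq> V \<and>
     (\<forall>i<5. \<forall>j<5. E (p ! i) (p ! j) \<longleftrightarrow> (i = Suc j \<or> j = Suc i)))"

definition connected_set :: "('a \<Rightarrow> 'a \<Rightarrow> bool) \<Rightarrow> 'a set \<Rightarrow> bool" where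
  "connected_set E S \<longleftrightarrow> S \<noteq> {} \<and>
     (\<forall>u\<in>S. \<forall>v\<in>S. (\<lambda>x y. x \<in> S \<and> y \<in> S \<and> E x y)\<^sup>*\<^sup>* u v)"

definition component_of :: "('a \<Rightarrow> 'a \<Rightarrow> bool) \<Rightarrow> 'a set \<Rightarrow> 'a set \<Rightarrow> bool" where
  "component_of E Y Y' \<longleftrightarrow> Y' \<subseteq> Y \<and> connected_set E Y' \<and>
     (\<forall>Z. Y' \<subseteq> Z \<and> Z \<subseteq> Y \<and> connected_set E Z \<longrightarrow> Z = Y')"

definition independent :: "('a \<Rightarrow> 'a \<Rightarrow> bool) \<Rightarrow> 'a set \<Rightarrow> bool" where
  "independent E S \<longleftrightarrow> (\<forall>x\<in>S. \<forall>y\<in>S. \<not> E x y)"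

end

theory Submission
  imports Defs
begin

text \<open>
  Suppose some x outside a component Y' of G[Y] sees u \<in> Y' but not v \<in> Y'. Along a path
  from u to v inside Y' there is an edge y1 y2 with x adjacent to y1 only. By maximality of Y'
  and since Y' has no neighbours in C, x lies in N(C). If x sees D, then, as x misses all of
  the nonempty set D \<inter> C_r for some r, connectivity of D gives an edge d1 d2 of D with x
  adjacent to d1 only, and y2 y1 x d1 d2 is an induced P5. Otherwise x sees some c \<in> C - D, which
  has a neighbour d \<in> D, and y2 y1 x c d is an induced P5.
\<close>

lemma graph_sym: "graph V E \<Longrightarrow> E u v \<Longrightarrow> E v u"
  and graph_irrefl: "graph V E \<Longrightarrow> \<not> E v v"
  unfolding graph_def by blast+

lemma rtranclp_boundary_step:
  assumes "R\<^sup>*\<^sup>* a b" "P a" "\<not> P b"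
  shows "\<exists>x y. R x y \<and> P x \<and> \<not> P y"
  using assms by (induction rule: rtranclp_induct) auto

lemma connected_set_splitting_edge:
  assumes "connected_set E S" "a \<in> S" "b \<in> S" "P a" "\<not> P b"
  shows "\<exists>s\<^sub>1\<in>S. \<exists>s\<^sub>2\<in>S. E s\<^sub>1 s\<^sub>2 \<and> P s\<^sub>1 \<and> \<not> P s\<^sub>2"
proof -
  have "(\<lambda>x y. x \<in> S \<and> y \<in> S \<and> E x y)\<^sup>*\<^sup>* a b"
    using assms(1-3) unfolding connected_set_def by blast
  then show ?thesis
    using rtranclp_boundary_step[where P = P] assms(4,5) by blast
qed

lemma connected_set_insert:
  assumes S: "connected_set E S" and y: "y \<in> S" and edges: "E x y" "E y x"
  shows "connected_set E (insert x S)"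
  unfolding connected_set_def
proof (intro conjI ballI)
  let ?R = "\<lambda>a b. a \<in> insert x S \<and> b \<in> insert x S \<and> E a b"
  have path_in_S: "?R\<^sup>*\<^sup>* a b" if "a \<in> S" "b \<in> S" for a b
  proof -
    have "(\<lambda>a b. a \<in> S \<and> b \<in> S \<and> E a b)\<^sup>*\<^sup>* a b"
      using S that unfolding connected_set_def by blast
    then show ?thesis
      by (rule rtranclp_mono[THEN predicate2D, rotated]) auto
  qed
  have to_y: "?R\<^sup>*\<^sup>* a y" and from_y: "?R\<^sup>*\<^sup>* y a" if "a \<in> insert x S" for a
    using that path_in_S y edges by (auto intro: r_into_rtranclp)
  fix a b assume "a \<in> insert x S" "b \<in> insert x S"
  then show "?R\<^sup>*\<^sup>* a b"
    using to_y from_y by (blast intro: rtranclp_trans)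
qed simp

lemma component_of_closed_adjacent:
  assumes "component_of E Y Y'" "y \<in> Y'" "x \<in> Y" "E x y" "E y x"
  shows "x \<in> Y'"
proof -
  have "connected_set E (insert x Y')"
    using assms connected_set_insert unfolding component_of_def by metis
  then have "insert x Y' = Y'"
    using assms unfolding component_of_def by blast
  then show ?thesis by blast
qed

lemma is_moduleI:
  assumes "M \<subseteq> V"
    and "\<And>u v x. u \<in> M \<Longrightarrow> v \<in> M \<Longrightarrow> x \<in> V - M \<Longrightarrow> E u x \<Longrightarrow> E v x"
  shows "is_module V E M"
  using assms unfolding is_module_def nbhd_def by blast

lemma P5_free_no_induced_path:
  assumes "P5_free V E" "graph V E"
    and "a \<in> V" "b \<in> V" "c \<in> V" "d \<in> V" "e \<in> V"
    and "E a b" "E b c" "E c d" "E d e"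
    and "\<not> E a c" "\<not> E a d" "\<not> E a e" "\<not> E b d" "\<not> E b e" "\<not> E c e"
  shows False
proof -
  have sym: "\<And>u v. E u v \<Longrightarrow> E v u" and irr: "\<And>v. \<not> E v v"
    using assms(2) graph_sym graph_irrefl by metis+
  let ?p = "[a, b, c, d, e]"
  have "distinct ?p"
    using assms(8-17) sym irr by auto
  moreover have "\<forall>i<5. \<forall>j<5. E (?p ! i) (?p ! j) \<longleftrightarrow> (i = Suc j \<or> j = Suc i)"
    using assms(8-17) sym irr by (auto simp: eval_nat_numeral less_Suc_eq)
  ultimately have "\<exists>p. length p = 5 \<and> distinct p \<and> set p \<subseteq> V \<and>
     (\<forall>i<5. \<forall>j<5. E (p ! i) (p ! j) \<longleftrightarrow> (i = Suc j \<or> j = Suc i))"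
    using assms(3-7) by (intro exI[of _ ?p]) simp
  then show False
    using assms(1) unfolding P5_free_def by blast
qed

lemma P5_free_nbhd_vertex_splits_no_edge:
  assumes G: "graph V E" and P5: "P5_free V E"
    and CV: "C \<subseteq> V" and DC: "D \<subseteq> C"
    and Dconn: "connected_set E D" and Ddom: "C \<subseteq> cnbhd V E D"
    and y: "y\<^sub>1 \<in> V - cnbhd V E C" "y\<^sub>2 \<in> V - cnbhd V E C" "E y\<^sub>1 y\<^sub>2"
    and x: "x \<in> nbhd V E C" "E y\<^sub>1 x" "\<not> E y\<^sub>2 x"
    and miss: "d' \<in> D" "\<not> E x d'"
  shows False
proof -
  have sym: "\<And>u v. E u v \<Longrightarrow> E v u"
    using G graph_sym by metis
  have xV: "x \<in> V" and xC: "x \<notin> C"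
    using x(1) unfolding nbhd_def by auto
  have far: "\<not> E y c" "\<not> E c y" if "y \<in> {y\<^sub>1, y\<^sub>2}" "c \<in> C" for y c
    using that y sym unfolding cnbhd_def nbhd_def by blast+
  have induced_path: False
    if "a \<in> C" "b \<in> C" "E x a" "E a b" "\<not> E x b" for a b
    using P5_free_no_induced_path[OF P5 G, of y\<^sub>2 y\<^sub>1 x a b] that y x xV CV far sym by blast
  show False
  proof (cases "\<exists>d\<in>D. E x d")
    case True
    then obtain d where "d \<in> D" "E x d" by blast
    then obtain d\<^sub>1 d\<^sub>2 where "d\<^sub>1 \<in> D" "d\<^sub>2 \<in> D" "E d\<^sub>1 d\<^sub>2" "E x d\<^sub>1" "\<not> E x d\<^sub>2"
      using connected_set_splitting_edge[OF Dconn, where P = "E x"] miss by blast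
    then show False
      using induced_path DC by blast
  next
    case False
    obtain c where c: "c \<in> C" "E x c"
      using x(1) sym unfolding nbhd_def by blast
    with False have "c \<notin> D" by blast
    then obtain d where "d \<in> D" "E c d"
      using c Ddom sym unfolding cnbhd_def nbhd_def by blast
    then show False
      using induced_path[of c d] c False DC by blast
  qed
qed

theorem claim4p4:
  fixes V :: "'a set" and E :: "'a \<Rightarrow> 'a \<Rightarrow> bool"
    and C D :: "'a set" and Cs :: "nat \<Rightarrow> 'a set" and k :: nat
  assumes G: "graph V E"
    and P5: "P5_free V E"
    and CV: "C \<subseteq> V"
    and Cpart: "C = (\<Union>r\<in>{1..k}. Cs r)"
    and Cdisj: "\<forall>r\<in>{1..k}. \<forall>s\<in>{1..k}. r \<noteq> s \<longrightarrow> Cs r \<inter> Cs s = {}"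
    and Cind: "\<forall>r\<in>{1..k}. independent E (Cs r)"
    and DC: "D \<subseteq> C"
    and Dconn: "connected_set E D"
    and Ddom: "C \<subseteq> cnbhd V E D"
    and Dmeet: "\<forall>r\<in>{1..k}. D \<inter> Cs r \<noteq> {}"
    and outside: "\<forall>u\<in>V - C. \<exists>r\<in>{1..k}. \<not> (\<exists>w\<in>D \<inter> Cs r. E u w)"
  shows "\<forall>Y'. component_of E (V - cnbhd V E C) Y' \<longrightarrow> is_module V E Y'"
proof (intro allI impI)
  fix Y' assume comp: "component_of E (V - cnbhd V E C) Y'"
  then have Y': "Y' \<subseteq> V - cnbhd V E C" "connected_set E Y'"
    unfolding component_of_def by blast+
  have sym: "\<And>u v. E u v \<Longrightarrow> E v u"
    using G graph_sym by metis
  show "is_module V E Y'"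
  proof (rule is_moduleI)
    fix u v x assume uv: "u \<in> Y'" "v \<in> Y'" and x: "x \<in> V - Y'" and "E u x"
    show "E v x"
    proof (rule ccontr)
      assume "\<not> E v x"
      then obtain y\<^sub>1 y\<^sub>2 where y: "y\<^sub>1 \<in> Y'" "y\<^sub>2 \<in> Y'" "E y\<^sub>1 y\<^sub>2" "E y\<^sub>1 x" "\<not> E y\<^sub>2 x"
        using connected_set_splitting_edge[OF Y'(2) uv, where P = "\<lambda>y. E y x"] \<open>E u x\<close> by blast
      have "x \<notin> V - cnbhd V E C"
        using component_of_closed_adjacent[OF comp y(1)] y(4) sym x by blast
      moreover have "x \<notin> C"
        using y(1,4) Y'(1) x sym unfolding cnbhd_def nbhd_def by blast
      ultimately have xN: "x \<in> nbhd V E C"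
        using x unfolding cnbhd_def by blast
      obtain d' where "d' \<in> D" "\<not> E x d'"
        using outside Dmeet \<open>x \<notin> C\<close> x by blast
      then show False
        using P5_free_nbhd_vertex_splits_no_edge[OF G P5 CV DC Dconn Ddom _ _ y(3) xN y(4,5)]
          y(1,2) Y'(1) by blast
    qed
  qed (use Y'(1) in blast)
qed

end
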